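(* Let $(N,\langle\cdot,\cdot\rangle,\varphi)$ be a modified $H$-type group (see context). The metric $\langle\cdot,\cdot\rangle$ is a nilsoliton if and only if the derived algebra $[\mathfrak v,\mathfrak v]$ is contained in a single eigenspace of $\mathrm{Rc}|_{\mathfrak z}$.
   Context: Let $N$ be a 2-step nilpotent real Lie group with Lie algebra $\mathfrak n$, Lie bracket $[\cdot,\cdot]$ and center $\mathfrak z$, endowed with a left-invariant pseudo-Riemannian metric $\langle\cdot,\cdot\rangle$ for which $\mathfrak z$ is nondegenerate. Put $\mathfrak v=\mathfrak z^\perp$. For $z\in\mathfrak z$ define $j(z)\in\mathrm{End}(\mathfrak v)$ by $\langle [x,y],z\rangle=\langle y,j(z)x\rangle$ for all $x,y\in\mathfrak v$. Given a quadratic form $\varphi$ on $\mathfrak z$, $(N,\langle\cdot,\cdot\rangle,\varphi)$ is a modified $H$-type group if $j(z)^2=-\varphi(z)\,\mathrm{Id}_{\mathfrak v}$ for all $z\in\mathfrak z$. The Ricci operator $\mathrm{Rc}:\mathfrak n\to\mathfrak n$ is defined by $\langle\mathrm{Rc}\,u,w\rangle=\mathrm{Ric}(u,w)$; it maps $\mathfrak z$ to $\mathfrak z$. The metric is a nilsoliton if there is a constant $c\in\mathbb R$ such that $D=\mathrm{Rc}+c\,\mathrm{Id}_{\mathfrak n}$ is a derivation of $\mathfrak n$, i.e. $D[u,w]=[Du,w]+[u,Dw]$ for all $u,w\in\mathfrak n$. *)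

theory Defs
  imports "HOL-Analysis.Analysis"
begin

text \<open>The Lie algebra n is modelled as a finite-dimensional real vector space 'a
(class euclidean_space; its inner product is only used to compute traces), with a
bracket br and a (pseudo-Riemannian) inner product g, both bilinear.\<close>

definition lie_algebra :: "('a::real_vector \<Rightarrow> 'a \<Rightarrow> 'a) \<Rightarrow> bool" where
  "lie_algebra br \<longleftrightarrow> bilinear br \<and> (\<forall>x. br x x = 0) \<and>
     (\<forall>x y z. br x (br y z) + br y (br z x) + br z (br x y) = 0)"

definition two_step_nilpotent :: "('a::real_vector \<Rightarrow> 'a \<Rightarrow> 'a) \<Rightarrow> bool" where
  "two_step_nilpotent br \<longleftrightarrow> lie_algebra br \<and> (\<forall>x y z. br (br x y) z = 0) \<and>
     (\<exists>x y. br x y \<noteq> 0)"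

definition pseudo_metric :: "('a::real_vector \<Rightarrow> 'a \<Rightarrow> real) \<Rightarrow> bool" where
  "pseudo_metric g \<longleftrightarrow> bilinear g \<and> (\<forall>x y. g x y = g y x) \<and>
     (\<forall>x. (\<forall>y. g x y = 0) \<longrightarrow> x = 0)"

definition center :: "('a::real_vector \<Rightarrow> 'a \<Rightarrow> 'a) \<Rightarrow> 'a set" where
  "center br = {x. \<forall>y. br x y = 0}"

definition orth_compl :: "('a \<Rightarrow> 'a \<Rightarrow> real) \<Rightarrow> 'a set \<Rightarrow> 'a set" where
  "orth_compl g S = {x. \<forall>z\<in>S. g x z = 0}"

text \<open>Levi-Civita connection of the left-invariant metric (Koszul formula).\<close>
definition levi_civita :: "('a \<Rightarrow> 'a \<Rightarrow> real) \<Rightarrow> ('a \<Rightarrow> 'a \<Rightarrow> 'a) \<Rightarrow> 'a \<Rightarrow> 'a \<Rightarrow> 'a" where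
  "levi_civita g br x y =
     (THE w. \<forall>z. g w z = (g (br x y) z - g (br y z) x + g (br z x) y) / 2)"

definition curvature :: "('a \<Rightarrow> 'a \<Rightarrow> real) \<Rightarrow> ('a::real_vector \<Rightarrow> 'a \<Rightarrow> 'a) \<Rightarrow> 'a \<Rightarrow> 'a \<Rightarrow> 'a \<Rightarrow> 'a" where
  "curvature g br x y w =
     levi_civita g br x (levi_civita g br y w) - levi_civita g br y (levi_civita g br x w)
     - levi_civita g br (br x y) w"

definition trace_op :: "('a::euclidean_space \<Rightarrow> 'a) \<Rightarrow> real" where
  "trace_op T = (\<Sum>b\<in>Basis. T b \<bullet> b)"

definition ricci :: "('a::euclidean_space \<Rightarrow> 'a \<Rightarrow> real) \<Rightarrow> ('a \<Rightarrow> 'a \<Rightarrow> 'a) \<Rightarrow> 'a \<Rightarrow> 'a \<Rightarrow> real" where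
  "ricci g br u w = trace_op (\<lambda>x. curvature g br x u w)"

definition ricci_op :: "('a::euclidean_space \<Rightarrow> 'a \<Rightarrow> real) \<Rightarrow> ('a \<Rightarrow> 'a \<Rightarrow> 'a) \<Rightarrow> 'a \<Rightarrow> 'a" where
  "ricci_op g br u = (THE r. \<forall>w. g r w = ricci g br u w)"

definition jmap :: "('a::real_vector \<Rightarrow> 'a \<Rightarrow> real) \<Rightarrow> ('a \<Rightarrow> 'a \<Rightarrow> 'a) \<Rightarrow> 'a \<Rightarrow> 'a \<Rightarrow> 'a" where
  "jmap g br z x = (THE w. w \<in> orth_compl g (center br) \<and>
      (\<forall>y\<in>orth_compl g (center br). g y w = g (br x y) z))"

definition quadratic_form_on :: "'a set \<Rightarrow> ('a::real_vector \<Rightarrow> real) \<Rightarrow> bool" where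
  "quadratic_form_on S phi \<longleftrightarrow>
     (\<exists>B. bilinear B \<and> (\<forall>x y. B x y = B y x) \<and> (\<forall>z\<in>S. phi z = B z z))"

definition modified_H_type ::
  "('a::real_vector \<Rightarrow> 'a \<Rightarrow> real) \<Rightarrow> ('a \<Rightarrow> 'a \<Rightarrow> 'a) \<Rightarrow> ('a \<Rightarrow> real) \<Rightarrow> bool" where
  "modified_H_type g br phi \<longleftrightarrow>
     two_step_nilpotent br \<and> pseudo_metric g \<and>
     (\<forall>x\<in>center br. (\<forall>y\<in>center br. g x y = 0) \<longrightarrow> x = 0) \<and>
     quadratic_form_on (center br) phi \<and>
     (\<forall>z\<in>center br. \<forall>x\<in>orth_compl g (center br).
        jmap g br z (jmap g br z x) = - (phi z) *\<^sub>R x)"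

definition is_derivation :: "('a::real_vector \<Rightarrow> 'a \<Rightarrow> 'a) \<Rightarrow> ('a \<Rightarrow> 'a) \<Rightarrow> bool" where
  "is_derivation br D \<longleftrightarrow> linear D \<and> (\<forall>u w. D (br u w) = br (D u) w + br u (D w))"

definition nilsoliton :: "('a::euclidean_space \<Rightarrow> 'a \<Rightarrow> real) \<Rightarrow> ('a \<Rightarrow> 'a \<Rightarrow> 'a) \<Rightarrow> bool" where
  "nilsoliton g br \<longleftrightarrow> (\<exists>c. is_derivation br (\<lambda>u. ricci_op g br u + c *\<^sub>R u))"

definition derived_subspace :: "('a::real_vector \<Rightarrow> 'a \<Rightarrow> 'a) \<Rightarrow> 'a set \<Rightarrow> 'a set" where
  "derived_subspace br S = span {br x y | x y. x \<in> S \<and> y \<in> S}"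

end

theory Submission
  imports Defs
begin

(* The Koszul formula expresses the curvature of a 2-step nilpotent metric Lie algebra through
   the bracket and j.  Tracing it, the mixed Ricci terms Ric(v, z) are sums of traces of
   operators with image in z (or v) that vanish on z (or v), hence are zero; so Rc preserves z.
   On v one gets Ric(x, y) = -1/2 sum_k eps_k <j(z_k) x, j(z_k) y>, and polarising
   j(z)^2 = -phi(z) turns this into a multiple a <x, y>, i.e. Rc = a Id on v.  Then for
   D = Rc + c Id we have [Du, w] + [u, Dw] = 2(a + c) [u, w], while D [u, w] = Rc [u, w] + c [u, w];
   so D is a derivation iff Rc = (2a + c) Id on [n, n] = [v, v], and such a c exists iff [v, v]
   lies in a single eigenspace of Rc. *)

lemma linear_inj_on_subspace_image_eq:
  fixes f :: "'a::euclidean_space \<Rightarrow> 'a"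
  assumes "linear f" "subspace S" "f ` S \<subseteq> S" "inj_on f S"
  shows "f ` S = S"
proof -
  have "dim (f ` S) = dim S"
    using dim_image_eq[OF assms(1), of S] assms(2,4) by (simp add: span_eq_iff[THEN iffD2])
  then show ?thesis
    using subspace_dim_equal[of "f ` S" S] linear_subspace_image[OF assms(1,2)] assms(2,3)
    by auto
qed

lemma trace_op_comp_commute:
  fixes A B :: "'a::euclidean_space \<Rightarrow> 'a"
  assumes "linear A" "linear B"
  shows "trace_op (A \<circ> B) = trace_op (B \<circ> A)"
proof -
  have expand: "F (G b) \<bullet> b = (\<Sum>d\<in>Basis. (G b \<bullet> d) * (F d \<bullet> b))"
    if "linear F" for F G :: "'a \<Rightarrow> 'a" and b
  proof -
    have "F (G b) = F (\<Sum>d\<in>Basis. (G b \<bullet> d) *\<^sub>R d)" by (simp add: euclidean_representation)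
    also have "\<dots> = (\<Sum>d\<in>Basis. (G b \<bullet> d) *\<^sub>R F d)"
      by (simp add: linear_sum[OF that] linear_scale[OF that])
    finally show ?thesis by (simp add: inner_sum_left)
  qed
  have "trace_op (A \<circ> B) = (\<Sum>b\<in>Basis. \<Sum>d\<in>Basis. (B b \<bullet> d) * (A d \<bullet> b))"
    unfolding trace_op_def using expand[OF assms(1)] by simp
  also have "\<dots> = (\<Sum>d\<in>Basis. \<Sum>b\<in>Basis. (A d \<bullet> b) * (B b \<bullet> d))"
    by (subst sum.swap) (simp add: mult.commute)
  also have "\<dots> = trace_op (B \<circ> A)"
    unfolding trace_op_def using expand[OF assms(2)] by simp
  finally show ?thesis .
qed

lemma trace_op_eq_0_if_factors:
  fixes A B T :: "'a::euclidean_space \<Rightarrow> 'a"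
  assumes "linear A" "linear B" "linear T"
    and "\<And>x. T x = A (T (B x))" and "\<And>x. B (A x) = 0"
  shows "trace_op T = 0"
proof -
  have "trace_op T = trace_op (A \<circ> (T \<circ> B))"
    by (simp add: o_def assms(4)[symmetric])
  also have "\<dots> = trace_op ((T \<circ> B) \<circ> A)"
    using assms(1-3) by (intro trace_op_comp_commute) (auto intro: linear_compose)
  also have "\<dots> = 0"
    unfolding trace_op_def using assms(5) linear_0[OF assms(3)] by simp
  finally show ?thesis .
qed

lemma trace_op_add: "trace_op (\<lambda>x. f x + h x) = trace_op f + trace_op h"
  and trace_op_diff: "trace_op (\<lambda>x. f x - h x) = trace_op f - trace_op h"
  and trace_op_scale: "trace_op (\<lambda>x. a *\<^sub>R f x) = a * trace_op f"
  unfolding trace_op_def by (simp_all add: inner_add_left inner_diff_left sum.distrib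
      sum_subtractf sum_distrib_left)

lemma bilinear_nondegenerate_on_represents:
  fixes g :: "'a::euclidean_space \<Rightarrow> 'a \<Rightarrow> real" and l :: "'a \<Rightarrow> real"
  assumes g: "bilinear g" and S: "subspace S"
    and nondeg: "\<And>x. x \<in> S \<Longrightarrow> (\<And>y. y \<in> S \<Longrightarrow> g x y = 0) \<Longrightarrow> x = 0"
    and l: "linear l"
  shows "\<exists>z\<in>S. \<forall>c\<in>S. g z c = l c"
proof -
  obtain C where C: "C \<subseteq> S" "independent C" "S \<subseteq> span C"
    by (rule basis_exists)
  have span_C: "span C = S"
    using span_minimal[OF C(1) S] C(3) by auto
  have coeff_0: "\<forall>c\<in>C. a c = 0" if "(\<Sum>c\<in>C. a c *\<^sub>R c) = 0" for a
    using C(2) that independent_explicit by blast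
  have vanish: "m x = 0" if "linear m" "\<forall>c\<in>C. m c = 0" "x \<in> S" for m x
    using linear_eq_0_on_span[OF that(1)] that(2,3) span_C by blast
  have g_lin: "linear (g u)" "linear (\<lambda>x. g x u)" for u
    using g unfolding bilinear_def by auto
  define f where "f u = (\<Sum>c\<in>C. g u c *\<^sub>R c)" for u
  have f_lin: "linear f"
    unfolding f_def by (rule linearI) (simp_all add: bilinear_ladd[OF g] bilinear_lmul[OF g]
        scaleR_add_left sum.distrib scaleR_sum_right)
  have in_S: "(\<Sum>c\<in>C. a c *\<^sub>R c) \<in> S" for a
    unfolding span_C[symmetric] by (intro span_sum span_scale) (simp add: span_base)
  have "inj_on f S"
    unfolding linear_inj_on_iff_eq_0[OF f_lin S]
  proof (intro ballI impI)
    fix u assume "u \<in> S" "f u = 0"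
    then have "\<forall>c\<in>C. g u c = 0"
      using coeff_0[of "g u"] unfolding f_def by blast
    then show "u = 0"
      using nondeg[OF \<open>u \<in> S\<close>] vanish[OF g_lin(1)] by blast
  qed
  then have "f ` S = S"
    using linear_inj_on_subspace_image_eq[OF f_lin S] in_S unfolding f_def by blast
  then obtain z where z: "z \<in> S" "f z = (\<Sum>c\<in>C. l c *\<^sub>R c)"
    using in_S by (metis imageE)
  then have "(\<Sum>c\<in>C. (g z c - l c) *\<^sub>R c) = 0"
    unfolding f_def by (simp add: scaleR_diff_left sum_subtractf)
  then have "\<forall>c\<in>C. g z c - l c = 0"
    by (rule coeff_0)
  then have "\<forall>c\<in>S. g z c - l c = 0"
    using vanish[OF linear_compose_sub[OF g_lin(1)[of z] l]] by blast
  then show ?thesis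
    using z(1) by auto
qed

locale nondegenerate_form =
  fixes g :: "'a::euclidean_space \<Rightarrow> 'a \<Rightarrow> real"
  assumes pseudo_metric: "pseudo_metric g"
begin

lemma bilinear_g: "bilinear g"
  and g_commute: "g x y = g y x"
  and g_nondegenerate: "(\<And>y. g x y = 0) \<Longrightarrow> x = 0"
  using pseudo_metric unfolding pseudo_metric_def by auto

lemmas g_simps =
  bilinear_ladd[OF bilinear_g] bilinear_radd[OF bilinear_g]
  bilinear_lmul[OF bilinear_g] bilinear_rmul[OF bilinear_g]
  bilinear_lsub[OF bilinear_g] bilinear_rsub[OF bilinear_g]
  bilinear_lneg[OF bilinear_g] bilinear_rneg[OF bilinear_g]
  bilinear_lzero[OF bilinear_g] bilinear_rzero[OF bilinear_g]

lemma linear_g_left: "linear (\<lambda>x. g x y)"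
  and linear_g_right: "linear (g x)"
  using bilinear_g unfolding bilinear_def by auto

lemma g_sum_left: "g (\<Sum>i\<in>I. f i) y = (\<Sum>i\<in>I. g (f i) y)"
  and g_sum_right: "g x (\<Sum>i\<in>I. f i) = (\<Sum>i\<in>I. g x (f i))"
  using linear_sum[OF linear_g_left] linear_sum[OF linear_g_right] by auto

lemma g_eqI: "(\<And>w. g u w = g v w) \<Longrightarrow> u = v"
  using g_nondegenerate[of "u - v"] by (simp add: g_simps)

lemma g_represents:
  assumes "linear l"
  shows "\<exists>!r. \<forall>w. g r w = l w"
proof -
  obtain r where "\<forall>w. g r w = l w"
    using bilinear_nondegenerate_on_represents[OF bilinear_g subspace_UNIV _ assms]
      g_nondegenerate by auto
  then show ?thesis
    using g_eqI by metis
qed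

lemma g_the_representative: "linear l \<Longrightarrow> g (THE r. \<forall>w. g r w = l w) w = l w"
  using theI'[OF g_represents] by blast

(* With gdual b the g-dual of the Euclidean basis vector b, gcontract h is the contraction of
   h with the inverse metric, i.e. sum_k eps_k h(e_k, e_k) for any g-orthonormal basis e_k. *)
definition gdual :: "'a \<Rightarrow> 'a" where
  "gdual b = (THE f. \<forall>s. g f s = s \<bullet> b)"

lemma g_gdual: "g (gdual b) s = s \<bullet> b"
  unfolding gdual_def
  by (rule g_the_representative) (rule bounded_linear.linear[OF bounded_linear_inner_left])

definition gcontract :: "('a \<Rightarrow> 'a \<Rightarrow> real) \<Rightarrow> real" where
  "gcontract h = (\<Sum>b\<in>Basis. h b (gdual b))"

lemma trace_op_eq_gcontract: "trace_op T = gcontract (\<lambda>t s. g (T t) s)"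
  unfolding trace_op_def gcontract_def by (simp add: g_commute[of "T _"] g_gdual)

lemma gcontract_cong: "(\<And>u w. h u w = k u w) \<Longrightarrow> gcontract h = gcontract k"
  unfolding gcontract_def by simp

lemma gcontract_add: "gcontract (\<lambda>u w. h u w + k u w) = gcontract h + gcontract k"
  and gcontract_minus: "gcontract (\<lambda>u w. - h u w) = - gcontract h"
  unfolding gcontract_def by (simp_all add: sum.distrib sum_distrib_left sum_negf)

lemma gcontract_commute:
  "gcontract (\<lambda>t s. gcontract (\<lambda>u w. F t s u w)) = gcontract (\<lambda>u w. gcontract (\<lambda>t s. F t s u w))"
  unfolding gcontract_def by (rule sum.swap)

lemma euclidean_representation_gdual: "(\<Sum>b\<in>Basis. g u (gdual b) *\<^sub>R b) = u"
  by (simp add: g_commute[of u] g_gdual euclidean_representation)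

lemma gdual_representation: "(\<Sum>b\<in>Basis. g u b *\<^sub>R gdual b) = u"
proof (rule g_eqI)
  fix s
  have "g (\<Sum>b\<in>Basis. g u b *\<^sub>R gdual b) s = g u (\<Sum>b\<in>Basis. (s \<bullet> b) *\<^sub>R b)"
    by (simp add: g_sum_left g_sum_right g_simps g_gdual mult.commute)
  then show "g (\<Sum>b\<in>Basis. g u b *\<^sub>R gdual b) s = g u s"
    by (simp add: euclidean_representation)
qed

lemma gcontract_outer: "gcontract (\<lambda>t s. g u t * g s w) = g u w"
proof -
  have "g u w = g (\<Sum>b\<in>Basis. g u b *\<^sub>R gdual b) w"
    by (simp add: gdual_representation)
  then show ?thesis
    unfolding gcontract_def by (simp add: g_sum_left g_simps g_commute[of w])
qed

lemma gcontract_swap: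
  assumes "bilinear h"
  shows "gcontract (\<lambda>u w. h w u) = gcontract h"
proof -
  have lin: "linear (h b)" "linear (\<lambda>x. h x b)" for b
    using assms unfolding bilinear_def by auto
  have expand: "h b (gdual b) = (\<Sum>d\<in>Basis. g (gdual b) (gdual d) * h b d)"
    and expand': "h (gdual b) b = (\<Sum>d\<in>Basis. g (gdual b) (gdual d) * h d b)" for b
  proof -
    have "h b (gdual b) = h b (\<Sum>d\<in>Basis. g (gdual b) (gdual d) *\<^sub>R d)"
      and "h (gdual b) b = h (\<Sum>d\<in>Basis. g (gdual b) (gdual d) *\<^sub>R d) b"
      by (simp_all only: euclidean_representation_gdual)
    then show "h b (gdual b) = (\<Sum>d\<in>Basis. g (gdual b) (gdual d) * h b d)"
      and "h (gdual b) b = (\<Sum>d\<in>Basis. g (gdual b) (gdual d) * h d b)"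
      by (simp_all add: linear_sum[OF lin(1)] linear_scale[OF lin(1)]
          linear_sum[OF lin(2)] linear_scale[OF lin(2)])
  qed
  have "gcontract h = (\<Sum>b\<in>Basis. \<Sum>d\<in>Basis. g (gdual b) (gdual d) * h b d)"
    unfolding gcontract_def by (simp add: expand)
  also have "\<dots> = (\<Sum>d\<in>Basis. \<Sum>b\<in>Basis. g (gdual d) (gdual b) * h b d)"
    by (subst sum.swap) (simp only: g_commute[of "gdual _" "gdual _"])
  also have "\<dots> = gcontract (\<lambda>u w. h w u)"
    unfolding gcontract_def by (simp add: expand')
  finally show ?thesis by simp
qed

lemma gcontract_skew:
  assumes "bilinear h" "\<And>u w. h w u = - h u w"
  shows "gcontract h = 0"
proof -
  have "gcontract h = gcontract (\<lambda>u w. h w u)"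
    by (rule gcontract_swap[OF assms(1), symmetric])
  also have "\<dots> = gcontract (\<lambda>u w. - h u w)"
    by (rule gcontract_cong) (rule assms(2))
  also have "\<dots> = - gcontract h"
    by (rule gcontract_minus)
  finally show ?thesis by simp
qed

lemma trace_op_g_skew:
  assumes "linear T" "\<And>u w. g (T u) w = - g u (T w)"
  shows "trace_op T = 0"
proof -
  have "bilinear (\<lambda>t s. g (T t) s)"
    using assms(1) unfolding bilinear_def
    by (auto intro: linear_compose[OF assms(1) linear_g_left, unfolded o_def] linear_g_right)
  then show ?thesis
    unfolding trace_op_eq_gcontract
    by (rule gcontract_skew) (metis assms(2) g_commute)
qed

end

locale nondegenerate_subspace = nondegenerate_form +
  fixes W :: "'a set"
  assumes subspace_W: "subspace W"
    and W_nondegenerate: "x \<in> W \<Longrightarrow> (\<And>y. y \<in> W \<Longrightarrow> g x y = 0) \<Longrightarrow> x = 0"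
begin

lemma proj_ex1: "\<exists>!z. z \<in> W \<and> (\<forall>c\<in>W. g z c = g u c)"
proof -
  obtain z where z: "z \<in> W" "\<forall>c\<in>W. g z c = g u c"
    using bilinear_nondegenerate_on_represents[OF bilinear_g subspace_W W_nondegenerate
        linear_g_right] by blast
  moreover have "z' = z" if "z' \<in> W" "\<forall>c\<in>W. g z' c = g u c" for z'
    using W_nondegenerate[of "z' - z"] subspace_diff[OF subspace_W] that z
    by (simp add: g_simps)
  ultimately show ?thesis by blast
qed

definition proj :: "'a \<Rightarrow> 'a" where
  "proj u = (THE z. z \<in> W \<and> (\<forall>c\<in>W. g z c = g u c))"

definition coproj :: "'a \<Rightarrow> 'a" where
  "coproj u = u - proj u"

lemma proj_in: "proj u \<in> W"
  and g_proj: "c \<in> W \<Longrightarrow> g (proj u) c = g u c"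
  using theI'[OF proj_ex1[of u]] unfolding proj_def by auto

lemma proj_eqI: "z \<in> W \<Longrightarrow> (\<And>c. c \<in> W \<Longrightarrow> g z c = g u c) \<Longrightarrow> proj u = z"
  using proj_ex1[of u] proj_in g_proj by blast

lemma coproj_in: "coproj u \<in> orth_compl g W"
  unfolding coproj_def orth_compl_def by (simp add: g_simps g_proj)

lemma proj_add_coproj: "proj u + coproj u = u"
  unfolding coproj_def by simp

lemma linear_proj: "linear proj"
  by (rule linearI; rule proj_eqI)
    (auto simp: proj_in subspace_add[OF subspace_W] subspace_scale[OF subspace_W] g_simps g_proj)

lemma linear_coproj: "linear coproj"
  unfolding coproj_def[abs_def] by (intro linear_compose_sub linear_ident linear_proj)

lemma proj_W: "c \<in> W \<Longrightarrow> proj c = c"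
  by (rule proj_eqI) auto

lemma proj_orth: "v \<in> orth_compl g W \<Longrightarrow> proj v = 0"
  by (rule proj_eqI) (auto simp: subspace_0[OF subspace_W] orth_compl_def g_simps)

lemma coproj_W: "c \<in> W \<Longrightarrow> coproj c = 0"
  by (simp add: coproj_def proj_W)

lemma coproj_orth: "v \<in> orth_compl g W \<Longrightarrow> coproj v = v"
  by (simp add: coproj_def proj_orth)

lemma coproj_proj: "coproj (proj u) = 0"
  by (simp add: coproj_W proj_in)

lemma proj_coproj: "proj (coproj u) = 0"
  by (simp add: proj_orth coproj_in)

lemma coproj_idem: "coproj (coproj u) = coproj u"
  by (simp add: coproj_orth coproj_in)

lemma g_orth_left: "v \<in> orth_compl g W \<Longrightarrow> g v w = g v (coproj w)"
  using coproj_in[of w] proj_in[of w]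
  by (simp add: coproj_def g_simps orth_compl_def)

lemma g_coproj_commute: "g (coproj u) w = g u (coproj w)"
  using g_orth_left[OF coproj_in, of u w] g_orth_left[OF coproj_in, of w u] g_commute by metis

lemma subspace_orth_compl: "subspace (orth_compl g W)"
  unfolding subspace_def orth_compl_def by (simp add: g_simps)

lemma trace_op_W_valued:
  assumes "linear T" "\<And>x. T x \<in> W" "\<And>c. c \<in> W \<Longrightarrow> T c = 0"
  shows "trace_op T = 0"
proof (rule trace_op_eq_0_if_factors[OF linear_proj linear_coproj assms(1)])
  fix x
  have "T x = T (coproj x)"
    using linear_add[OF assms(1), of "proj x" "coproj x"] assms(3)[OF proj_in]
    by (simp add: proj_add_coproj)
  then show "T x = proj (T (coproj x))"
    using proj_W[OF assms(2)] by simp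
qed (rule coproj_proj)

lemma trace_op_orth_valued:
  assumes "linear T" "\<And>x. T x \<in> orth_compl g W" "\<And>v. v \<in> orth_compl g W \<Longrightarrow> T v = 0"
  shows "trace_op T = 0"
proof (rule trace_op_eq_0_if_factors[OF linear_coproj linear_proj assms(1)])
  fix x
  have "T x = T (proj x)"
    using linear_add[OF assms(1), of "proj x" "coproj x"] assms(3)[OF coproj_in]
    by (simp add: proj_add_coproj)
  then show "T x = coproj (T (proj x))"
    using coproj_orth[OF assms(2)] by simp
qed (rule proj_coproj)

lemma orth_compl_nondegenerate:
  "v \<in> orth_compl g W \<Longrightarrow> (\<And>y. y \<in> orth_compl g W \<Longrightarrow> g v y = 0) \<Longrightarrow> v = 0"
  using g_orth_left coproj_in g_nondegenerate by metis

end

locale two_step_metric = nondegenerate_form g for g :: "'a::euclidean_space \<Rightarrow> 'a \<Rightarrow> real" +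
  fixes br :: "'a \<Rightarrow> 'a \<Rightarrow> 'a"
  assumes lie_algebra: "lie_algebra br"
    and two_step: "br (br x y) z = 0"
    and center_nondegenerate: "x \<in> center br \<Longrightarrow> (\<And>y. y \<in> center br \<Longrightarrow> g x y = 0) \<Longrightarrow> x = 0"
begin

abbreviation Z :: "'a set" where "Z \<equiv> center br"
abbreviation V :: "'a set" where "V \<equiv> orth_compl g Z"
abbreviation J :: "'a \<Rightarrow> 'a \<Rightarrow> 'a" where "J \<equiv> jmap g br"
abbreviation nabla :: "'a \<Rightarrow> 'a \<Rightarrow> 'a" where "nabla \<equiv> levi_civita g br"
abbreviation R :: "'a \<Rightarrow> 'a \<Rightarrow> 'a \<Rightarrow> 'a" where "R \<equiv> curvature g br"
abbreviation Rc :: "'a \<Rightarrow> 'a" where "Rc \<equiv> ricci_op g br"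

lemma bilinear_br: "bilinear br"
  and br_self: "br x x = 0"
  using lie_algebra unfolding lie_algebra_def by auto

lemmas br_simps =
  bilinear_ladd[OF bilinear_br] bilinear_radd[OF bilinear_br]
  bilinear_lmul[OF bilinear_br] bilinear_rmul[OF bilinear_br]
  bilinear_lsub[OF bilinear_br] bilinear_rsub[OF bilinear_br]
  bilinear_lneg[OF bilinear_br] bilinear_rneg[OF bilinear_br]
  bilinear_lzero[OF bilinear_br] bilinear_rzero[OF bilinear_br]

lemma br_anticommute: "br y x = - br x y"
proof -
  have "br (x + y) (x + y) = br x x + br x y + br y x + br y y"
    by (simp only: bilinear_ladd[OF bilinear_br] bilinear_radd[OF bilinear_br] ac_simps)
  then have "br x y + br y x = 0"
    by (simp add: br_self)
  then show ?thesis
    by (metis add.commute eq_neg_iff_add_eq_0)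
qed

lemma br_in_center: "br x y \<in> Z"
  unfolding center_def by (simp add: two_step)

lemma center_br_left: "c \<in> Z \<Longrightarrow> br c y = 0"
  and center_br_right: "c \<in> Z \<Longrightarrow> br y c = 0"
  unfolding center_def by (auto simp: br_anticommute[of c])

lemma subspace_center: "subspace Z"
  unfolding subspace_def center_def by (simp add: br_simps)

sublocale nondegenerate_subspace g Z
  by unfold_locales (simp_all add: subspace_center center_nondegenerate)

lemma br_coproj: "br x y = br (coproj x) (coproj y)"
  using proj_add_coproj[of x] proj_add_coproj[of y] proj_in[of x] proj_in[of y]
  by (metis add.commute add_0 bilinear_ladd[OF bilinear_br] bilinear_radd[OF bilinear_br]
      center_br_left center_br_right)

lemma jmap_char: "J c x \<in> V \<and> (\<forall>y. g y (J c x) = g (br x y) c)"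
proof -
  have "linear (\<lambda>y. g (br x y) c)"
    using linear_compose[of "br x" "\<lambda>u. g u c"] bilinear_br linear_g_left
    unfolding bilinear_def o_def by blast
  then obtain r where r: "\<forall>y. g r y = g (br x y) c"
    using g_represents by blast
  have r_V: "r \<in> V"
    unfolding orth_compl_def using r center_br_right by (simp add: g_simps)
  have "J c x = r"
    unfolding jmap_def
  proof (rule the_equality)
    show "r \<in> V \<and> (\<forall>y\<in>V. g y r = g (br x y) c)"
      using r r_V g_commute by auto
    fix w assume w: "w \<in> V \<and> (\<forall>y\<in>V. g y w = g (br x y) c)"
    have "g (w - r) y = 0" if "y \<in> V" for y
    proof -
      have "g y w = g y r"
        using w that r g_commute by metis
      then show ?thesis
        by (simp add: g_simps g_commute[of w y] g_commute[of r y])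
    qed
    then show "w = r"
      using orth_compl_nondegenerate[of "w - r"] subspace_diff[OF subspace_orth_compl] w r_V
      by simp
  qed
  then show ?thesis
    using r r_V g_commute by auto
qed

lemma jmap_in_orth: "J c x \<in> V"
  and g_jmap: "g y (J c x) = g (br x y) c"
  using jmap_char by auto

lemma jmap_eqI: "(\<And>y. g y w = g (br x y) c) \<Longrightarrow> J c x = w"
  by (rule g_eqI) (metis g_commute g_jmap)

lemma bilinear_jmap: "bilinear J"
  unfolding bilinear_def
  by (auto intro!: linearI jmap_eqI simp: g_simps g_jmap br_simps)

lemmas jmap_simps =
  bilinear_ladd[OF bilinear_jmap] bilinear_radd[OF bilinear_jmap]
  bilinear_lmul[OF bilinear_jmap] bilinear_rmul[OF bilinear_jmap]
  bilinear_lsub[OF bilinear_jmap] bilinear_rsub[OF bilinear_jmap]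
  bilinear_lneg[OF bilinear_jmap] bilinear_rneg[OF bilinear_jmap]
  bilinear_lzero[OF bilinear_jmap] bilinear_rzero[OF bilinear_jmap]

lemma jmap_skew: "g (J c x) y = - g x (J c y)"
  using g_jmap[of y c x] g_jmap[of x c y] br_anticommute[of x y] g_commute[of "J c x" y]
  by (simp add: g_simps)

lemma jmap_proj: "J (proj c) x = J c x"
  by (rule jmap_eqI) (metis g_jmap g_proj[OF br_in_center] g_commute)

lemma jmap_center: "x \<in> Z \<Longrightarrow> J c x = 0"
  by (rule jmap_eqI) (simp add: center_br_left g_simps)

lemma jmap_orth: "c \<in> V \<Longrightarrow> J c x = 0"
  by (rule jmap_eqI) (simp add: g_simps orth_compl_def br_in_center g_commute[of _ c])

lemma levi_civita_eq: "nabla u w = (1/2) *\<^sub>R br u w - (1/2) *\<^sub>R J w u - (1/2) *\<^sub>R J u w"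
proof -
  define r where "r = (1/2) *\<^sub>R br u w - (1/2) *\<^sub>R J w u - (1/2) *\<^sub>R J u w"
  have koszul: "g r z = (g (br u w) z - g (br w z) u + g (br z u) w) / 2" for z
    using g_jmap[of z w u] g_jmap[of z u w] br_anticommute[of u z]
      g_commute[of "J w u" z] g_commute[of "J u w" z]
    unfolding r_def by (simp add: g_simps)
  show ?thesis
    unfolding levi_civita_def r_def[symmetric]
  proof (rule the_equality)
    fix q assume "\<forall>z. g q z = (g (br u w) z - g (br w z) u + g (br z u) w) / 2"
    then show "q = r"
      using koszul by (intro g_eqI) (metis (no_types))
  qed (use koszul in blast)
qed

lemma bilinear_levi_civita: "bilinear nabla"
  unfolding bilinear_def levi_civita_eq
  by (auto intro!: linearI simp: br_simps jmap_simps algebra_simps)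

lemmas levi_civita_simps =
  bilinear_ladd[OF bilinear_levi_civita] bilinear_radd[OF bilinear_levi_civita]
  bilinear_lmul[OF bilinear_levi_civita] bilinear_rmul[OF bilinear_levi_civita]

lemma linear_br_left: "linear (\<lambda>t. br t p)"
  and linear_br_right: "linear (br p)"
  and linear_jmap_left: "linear (\<lambda>t. J t p)"
  and linear_jmap_right: "linear (J p)"
  using bilinear_br bilinear_jmap unfolding bilinear_def by auto

lemmas two_step_simps = two_step br_in_center center_br_left center_br_right
  jmap_center jmap_orth jmap_in_orth

lemma curvature_orth_orth:
  "x \<in> V \<Longrightarrow> y \<in> V \<Longrightarrow> R t x y = - (1/4) *\<^sub>R J (br x y) t + (1/4) *\<^sub>R J (br t y) x
     + (1/4) *\<^sub>R br x (J t y) + (1/2) *\<^sub>R J (br t x) y"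
  unfolding curvature_def
  by (simp add: levi_civita_eq br_simps jmap_simps two_step_simps algebra_simps)

lemma curvature_orth_center:
  "x \<in> V \<Longrightarrow> c \<in> Z \<Longrightarrow> R t x c =
     - (1/4) *\<^sub>R br t (J c x) + (1/4) *\<^sub>R J t (J c x) + (1/4) *\<^sub>R br x (J c t)"
  unfolding curvature_def
  by (simp add: levi_civita_eq br_simps jmap_simps two_step_simps algebra_simps)

lemma curvature_center_orth:
  "c \<in> Z \<Longrightarrow> y \<in> V \<Longrightarrow> R t c y =
     - (1/4) *\<^sub>R br t (J c y) + (1/4) *\<^sub>R J t (J c y) - (1/4) *\<^sub>R J c (J t y)"
  unfolding curvature_def
  by (simp add: levi_civita_eq br_simps jmap_simps two_step_simps algebra_simps)

lemma curvature_add_mid: "R t (u + u') w = R t u w + R t u' w"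
  and curvature_scale_mid: "R t (a *\<^sub>R u) w = a *\<^sub>R R t u w"
  and curvature_add_right: "R t u (w + w') = R t u w + R t u w'"
  and curvature_scale_right: "R t u (a *\<^sub>R w) = a *\<^sub>R R t u w"
  unfolding curvature_def by (simp_all add: levi_civita_simps br_simps algebra_simps)

lemma linear_ricci_left: "linear (\<lambda>u. ricci g br u w)"
  and linear_ricci_right: "linear (ricci g br u)"
  unfolding ricci_def
  by (auto intro!: linearI simp: curvature_add_mid curvature_scale_mid curvature_add_right
      curvature_scale_right trace_op_add trace_op_scale)

lemma g_ricci_op: "g (Rc u) w = ricci g br u w"
  unfolding ricci_op_def by (rule g_the_representative[OF linear_ricci_right])

lemma linear_ricci_op: "linear Rc"
  by (auto intro!: linearI g_eqI simp: g_simps g_ricci_op linear_add[OF linear_ricci_left]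
      linear_scale[OF linear_ricci_left])

lemma trace_br_left: "trace_op (\<lambda>t. br t p) = 0"
  by (rule trace_op_W_valued) (simp_all add: linear_br_left two_step_simps)

lemma trace_jmap_left: "trace_op (\<lambda>t. J t p) = 0"
  by (rule trace_op_orth_valued) (simp_all add: linear_jmap_left two_step_simps)

lemma trace_br_jmap_center: "c \<in> Z \<Longrightarrow> trace_op (\<lambda>t. br x (J c t)) = 0"
  by (rule trace_op_W_valued)
    (simp_all add: linear_compose[OF linear_jmap_right linear_br_right, unfolded o_def]
      two_step_simps br_simps)

lemma trace_jmap_jmap_left: "trace_op (\<lambda>t. J c (J t y)) = 0"
  by (rule trace_op_orth_valued)
    (simp_all add: linear_compose[OF linear_jmap_left linear_jmap_right, unfolded o_def]
      two_step_simps jmap_simps)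

lemma trace_jmap_right: "trace_op (J p) = 0"
  by (rule trace_op_g_skew[OF linear_jmap_right]) (rule jmap_skew)

lemma ricci_orth_center: "x \<in> V \<Longrightarrow> c \<in> Z \<Longrightarrow> ricci g br x c = 0"
  unfolding ricci_def curvature_orth_center
  by (simp add: trace_op_add trace_op_diff trace_op_scale trace_br_left trace_jmap_left
      trace_br_jmap_center)

lemma ricci_center_orth: "c \<in> Z \<Longrightarrow> y \<in> V \<Longrightarrow> ricci g br c y = 0"
  unfolding ricci_def curvature_center_orth
  by (simp add: trace_op_add trace_op_diff trace_op_scale trace_br_left trace_jmap_left
      trace_jmap_jmap_left)

lemma ricci_op_center: "c \<in> Z \<Longrightarrow> Rc c \<in> Z"
proof -
  assume c: "c \<in> Z"
  have "g (coproj (Rc c)) s = 0" for s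
    using ricci_center_orth[OF c coproj_in] by (simp add: g_coproj_commute g_ricci_op)
  then have "coproj (Rc c) = 0"
    by (rule g_nondegenerate)
  then show ?thesis
    using proj_add_coproj[of "Rc c"] proj_in[of "Rc c"] by simp
qed

(* Since J u depends only on proj u, this is sum_k eps_k <j(z_k) x, j(z_k) y> over a
   g-orthonormal basis z_k of the centre. *)
definition j_contraction :: "'a \<Rightarrow> 'a \<Rightarrow> real" where
  "j_contraction x y = gcontract (\<lambda>u w. g (J u x) (J w y))"

lemma bilinear_g_jmap_jmap: "bilinear (\<lambda>u w. g (J u x) (J w y))"
  unfolding bilinear_def by (auto intro!: linearI simp: g_simps jmap_simps)

lemma trace_jmap_br: "trace_op (\<lambda>t. J (br t y) x) = - j_contraction x y"
proof -
  have pointwise: "g (J (br t y) x) s = - gcontract (\<lambda>u w. g (J w y) t * g s (J u x))" for t s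
  proof -
    have "g (J (br t y) x) s = g (br x s) (br t y)"
      using g_jmap[of s "br t y" x] g_commute by metis
    also have "\<dots> = gcontract (\<lambda>u w. g (br x s) u * g w (br t y))"
      by (rule gcontract_outer[symmetric])
    also have "\<dots> = gcontract (\<lambda>u w. - (g (J w y) t * g s (J u x)))"
    proof (rule gcontract_cong)
      fix u w
      have "g w (br t y) = - g (J w y) t"
        using g_jmap[of y w t] jmap_skew[of w y t] g_commute[of w] by simp
      then show "g (br x s) u * g w (br t y) = - (g (J w y) t * g s (J u x))"
        using g_jmap[of s u x] by simp
    qed
    finally show ?thesis
      by (simp add: gcontract_minus)
  qed
  have "trace_op (\<lambda>t. J (br t y) x)
      = gcontract (\<lambda>t s. - gcontract (\<lambda>u w. g (J w y) t * g s (J u x)))"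
    unfolding trace_op_eq_gcontract by (rule gcontract_cong) (rule pointwise)
  also have "\<dots> = - gcontract (\<lambda>t s. gcontract (\<lambda>u w. g (J w y) t * g s (J u x)))"
    by (rule gcontract_minus)
  also have "\<dots> = - gcontract (\<lambda>u w. g (J w y) (J u x))"
    by (simp add: gcontract_commute gcontract_outer)
  finally show ?thesis
    unfolding j_contraction_def by (simp add: g_commute[of "J _ y"])
qed

lemma trace_br_jmap: "trace_op (\<lambda>t. br x (J t y)) = j_contraction x y"
proof -
  have "trace_op (\<lambda>t. br x (J t y)) = gcontract (\<lambda>t s. g (J s x) (J t y))"
    unfolding trace_op_eq_gcontract
    by (rule gcontract_cong) (simp add: g_jmap[symmetric] g_commute[of "J _ x"])
  also have "\<dots> = j_contraction x y"
    unfolding j_contraction_def by (rule gcontract_swap[OF bilinear_g_jmap_jmap])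
  finally show ?thesis .
qed

lemma ricci_orth_orth: "x \<in> V \<Longrightarrow> y \<in> V \<Longrightarrow> ricci g br x y = - (1/2) * j_contraction y x"
  unfolding ricci_def curvature_orth_orth
  by (simp add: trace_op_add trace_op_diff trace_op_scale trace_jmap_right trace_jmap_br
      trace_br_jmap)

lemma ricci_op_orth:
  assumes "\<And>x y. y \<in> V \<Longrightarrow> j_contraction x y = k * g x y" and "x \<in> V"
  shows "Rc x = - (k/2) *\<^sub>R x"
proof (rule g_eqI)
  fix w
  have "g (Rc x) w = ricci g br x (coproj w) + ricci g br x (proj w)"
    using linear_add[OF linear_ricci_right] proj_add_coproj[of w] g_ricci_op
    by (metis add.commute)
  also have "\<dots> = - (k/2) * g x (coproj w)"
    using ricci_orth_orth[OF assms(2) coproj_in] ricci_orth_center[OF assms(2) proj_in]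
      assms(1)[OF assms(2)] g_commute[of x]
    by simp
  also have "\<dots> = g (- (k/2) *\<^sub>R x) w"
    using g_orth_left[OF assms(2)] by (simp add: g_simps)
  finally show "g (Rc x) w = g (- (k/2) *\<^sub>R x) w" .
qed

lemma br_ricci_op:
  assumes "\<And>x. x \<in> V \<Longrightarrow> Rc x = a *\<^sub>R x"
  shows "br (Rc u) w = a *\<^sub>R br u w"
proof -
  have "Rc u = a *\<^sub>R coproj u + Rc (proj u)"
    using linear_add[OF linear_ricci_op, of "coproj u" "proj u"] proj_add_coproj[of u]
      assms[OF coproj_in] by (simp add: add.commute)
  then show ?thesis
    using center_br_left[OF ricci_op_center[OF proj_in]]
      br_coproj[of "coproj u" w] br_coproj[of u w]
    by (simp add: br_simps coproj_idem)
qed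

lemma derivation_ricci_shift_iff:
  assumes "\<And>x. x \<in> V \<Longrightarrow> Rc x = a *\<^sub>R x"
  shows "is_derivation br (\<lambda>u. Rc u + c *\<^sub>R u)
    \<longleftrightarrow> (\<forall>u w. Rc (br u w) = (2 * a + c) *\<^sub>R br u w)"
proof -
  have leibniz_rhs: "br (Rc u + c *\<^sub>R u) w + br u (Rc w + c *\<^sub>R w)
      = (2 * a + c) *\<^sub>R br u w + c *\<^sub>R br u w" for u w
  proof -
    have "br u (Rc w) = a *\<^sub>R br u w"
      using br_ricci_op[OF assms, of w u] br_anticommute[of u] by simp
    moreover have "(2 * a + c) + c = (a + c) + (a + c)"
      by simp
    ultimately show ?thesis
      using br_ricci_op[OF assms, of u w]
      by (simp add: br_simps scaleR_add_left[symmetric] add_ac)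
  qed
  have "linear (\<lambda>u. Rc u + c *\<^sub>R u)"
    by (intro linear_compose_add linear_ricci_op linear_scale_self)
  then show ?thesis
    unfolding is_derivation_def leibniz_rhs by simp
qed

lemma derived_eigenspace_iff:
  "(\<forall>w\<in>derived_subspace br V. Rc w = lam *\<^sub>R w) \<longleftrightarrow> (\<forall>u w. Rc (br u w) = lam *\<^sub>R br u w)"
proof
  assume "\<forall>w\<in>derived_subspace br V. Rc w = lam *\<^sub>R w"
  moreover have "br u w \<in> derived_subspace br V" for u w
    unfolding derived_subspace_def br_coproj[of u w] by (rule span_base) (auto intro: coproj_in)
  ultimately show "\<forall>u w. Rc (br u w) = lam *\<^sub>R br u w" by blast
next
  assume brackets: "\<forall>u w. Rc (br u w) = lam *\<^sub>R br u w"
  show "\<forall>w\<in>derived_subspace br V. Rc w = lam *\<^sub>R w"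
  proof
    fix w assume "w \<in> derived_subspace br V"
    then show "Rc w = lam *\<^sub>R w"
      unfolding derived_subspace_def
    proof (rule span_induct)
      show "subspace {w. Rc w = lam *\<^sub>R w}"
        unfolding subspace_def
        by (simp add: linear_add[OF linear_ricci_op] linear_scale[OF linear_ricci_op]
            linear_0[OF linear_ricci_op] algebra_simps)
    qed (use brackets in auto)
  qed
qed

lemma nilsoliton_iff_derived_eigenspace:
  assumes "\<And>x. x \<in> V \<Longrightarrow> Rc x = a *\<^sub>R x"
  shows "nilsoliton g br \<longleftrightarrow> (\<exists>lam. \<forall>w\<in>derived_subspace br V. Rc w = lam *\<^sub>R w)"
proof -
  have "nilsoliton g br \<longleftrightarrow> (\<exists>c. \<forall>u w. Rc (br u w) = (2 * a + c) *\<^sub>R br u w)"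
    unfolding nilsoliton_def using derivation_ricci_shift_iff[OF assms] by blast
  also have "\<dots> \<longleftrightarrow> (\<exists>lam. \<forall>u w. Rc (br u w) = lam *\<^sub>R br u w)"
  proof
    assume "\<exists>lam. \<forall>u w. Rc (br u w) = lam *\<^sub>R br u w"
    then obtain lam where "\<forall>u w. Rc (br u w) = (2 * a + (lam - 2 * a)) *\<^sub>R br u w"
      by auto
    then show "\<exists>c. \<forall>u w. Rc (br u w) = (2 * a + c) *\<^sub>R br u w" by blast
  qed blast
  also have "\<dots> \<longleftrightarrow> (\<exists>lam. \<forall>w\<in>derived_subspace br V. Rc w = lam *\<^sub>R w)"
    using derived_eigenspace_iff by blast
  finally show ?thesis .
qed

end

locale modified_H_type_algebra = two_step_metric +
  fixes phi :: "'a \<Rightarrow> real"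
  assumes quadratic_form: "quadratic_form_on Z phi"
    and jmap_square: "z \<in> Z \<Longrightarrow> x \<in> V \<Longrightarrow> J z (J z x) = - phi z *\<^sub>R x"
begin

lemma jmap_anticommutator:
  assumes B: "bilinear B" "\<And>x y. B x y = B y x" "\<And>z. z \<in> Z \<Longrightarrow> phi z = B z z"
    and y: "y \<in> V"
  shows "J u (J w y) + J w (J u y) = - (2 * B (proj u) (proj w)) *\<^sub>R y"
proof -
  have Z: "proj u \<in> Z" "proj w \<in> Z" "proj u + proj w \<in> Z"
    using proj_in subspace_add[OF subspace_center] by auto
  have "phi (proj u + proj w) = phi (proj u) + 2 * B (proj u) (proj w) + phi (proj w)"
    using B(3)[OF Z(3)] B(3)[OF Z(1)] B(3)[OF Z(2)] B(2)[of "proj w" "proj u"]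
    by (simp add: bilinear_ladd[OF B(1)] bilinear_radd[OF B(1)])
  moreover have "J (proj u + proj w) (J (proj u + proj w) y)
      = J (proj u) (J (proj u) y) + (J u (J w y) + J w (J u y)) + J (proj w) (J (proj w) y)"
    by (simp add: jmap_simps jmap_proj algebra_simps)
  ultimately show ?thesis
    using jmap_square[OF Z(1) y] jmap_square[OF Z(2) y] jmap_square[OF Z(3) y]
    by (simp add: algebra_simps)
qed

lemma j_contraction_orth: "\<exists>k. \<forall>x. \<forall>y\<in>V. j_contraction x y = k * g x y"
proof -
  obtain B where B: "bilinear B" "\<And>x y. B x y = B y x" "\<And>z. z \<in> Z \<Longrightarrow> phi z = B z z"
    using quadratic_form unfolding quadratic_form_on_def by blast
  define k where "k = gcontract (\<lambda>u w. B (proj u) (proj w))"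
  have "j_contraction x y = k * g x y" if y: "y \<in> V" for x y
  proof -
    define K where "K u w = g x (J u (J w y))" for u w
    have "bilinear K"
      unfolding K_def bilinear_def by (auto intro!: linearI simp: g_simps jmap_simps)
    then have "2 * gcontract K = gcontract (\<lambda>u w. K u w + K w u)"
      by (simp add: gcontract_add gcontract_swap)
    also have "\<dots> = gcontract (\<lambda>u w. - 2 * (B (proj u) (proj w) * g x y))"
      unfolding K_def
      by (simp add: jmap_anticommutator[OF B y] g_simps mult.assoc flip: g_simps(2))
    also have "\<dots> = - 2 * (k * g x y)"
      unfolding k_def gcontract_def by (simp add: sum_negf sum_distrib_left sum_distrib_right)
    finally have "gcontract K = - (k * g x y)" by simp
    moreover have "j_contraction x y = - gcontract K"
      unfolding j_contraction_def K_def
      by (simp add: jmap_skew gcontract_minus)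
    ultimately show ?thesis by simp
  qed
  then show ?thesis by blast
qed

lemma ricci_op_orth_scalar: "\<exists>a. \<forall>x\<in>V. Rc x = a *\<^sub>R x"
  using j_contraction_orth ricci_op_orth by blast

end

theorem theorem4p10:
  fixes g :: "'a::euclidean_space \<Rightarrow> 'a \<Rightarrow> real"
    and br :: "'a \<Rightarrow> 'a \<Rightarrow> 'a"
    and phi :: "'a \<Rightarrow> real"
  assumes "modified_H_type g br phi"
  shows "nilsoliton g br \<longleftrightarrow>
    (\<exists>lam::real. \<forall>w\<in>derived_subspace br (orth_compl g (center br)).
        ricci_op g br w = lam *\<^sub>R w)"
proof -
  interpret modified_H_type_algebra g br phi
    using assms unfolding modified_H_type_def two_step_nilpotent_def
    by unfold_locales auto
  obtain a where "\<forall>x\<in>V. Rc x = a *\<^sub>R x"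
    using ricci_op_orth_scalar by blast
  then show ?thesis
    using nilsoliton_iff_derived_eigenspace by blast
qed

end
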